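(* Let $S$ be a Hausdorff countably compact semitopological semigroup which is an orthogonal sum $S=\sum_{i\in\mathscr I}B^0_{\lambda_i}(S_i)$ of topological Brandt $\lambda_i^0$-extensions of semitopological monoids $S_i$ with zeros. Then for every open neighbourhood $U(0)$ of the zero $0$ of $S$ the set of triples $(i,\alpha_i,\beta_i)$ with $i\in\mathscr I$, $\alpha_i,\beta_i\in\lambda_i$ and $(S_i)_{\alpha_i,\beta_i}\not\subseteq U(0)$ is finite. Moreover, for every $i\in\mathscr I$ the subspace $B^0_{\lambda_i}(S_i)$ of $S$ is countably compact.
   Context: All spaces are Hausdorff; a semitopological semigroup is a Hausdorff space with separately continuous associative operation. For a semigroup $T$ with zero $0_T$ and a cardinal $\lambda\ge1$, $B^0_\lambda(T)=(\lambda\times (T\setminus\{0_T\})\times\lambda)\cup\{0\}$ with $(\alpha,a,\beta)(\gamma,b,\delta)=(\alpha,ab,\delta)$ if $\beta=\gamma$ and $ab\ne0_T$, and $0$ otherwise, $0$ a zero. For $A\subseteq T$, $A_{\alpha,\beta}=\{(\alpha,s,\beta):s\in A\setminus\{0_T\}\}\cup\{0\}$ if $0_T\in A$ and $\{(\alpha,s,\beta):s\in A\}$ otherwise. A topological Brandt $\lambda^0$-extension of a semitopological monoid $T$ with zero is $B^0_\lambda(T)$ with a topology making it a semitopological semigroup such that for some $\alpha\in\lambda$ the map $s\mapsto(\alpha,s,\alpha)$ ($0_T\mapsto0$) is a homeomorphism $T\to T_{\alpha,\alpha}$. The orthogonal sum of semigroups $T_\iota$ with zeros is $\{0\}\cup\bigcup_\iota(T_\iota\setminus\{0_\iota\})$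 with products computed in $T_\iota$ when both factors lie in the same $T_\iota$ and the product is non-zero, and $0$ otherwise. *)

theory Defs
  imports "HOL-Analysis.Analysis"
begin

definition countably_compact_space :: "'a topology \<Rightarrow> bool" where
  "countably_compact_space X \<longleftrightarrow>
     (\<forall>\<U>. countable \<U> \<and> (\<forall>U\<in>\<U>. openin X U) \<and> topspace X \<subseteq> \<Union>\<U> \<longrightarrow>
        (\<exists>\<F>. finite \<F> \<and> \<F> \<subseteq> \<U> \<and> topspace X \<subseteq> \<Union>\<F>))"

definition semitop_semigroup :: "'a topology \<Rightarrow> ('a \<Rightarrow> 'a \<Rightarrow> 'a) \<Rightarrow> bool" where
  "semitop_semigroup X f \<longleftrightarrow>
     Hausdorff_space X \<and>
     (\<forall>x\<in>topspace X. \<forall>y\<in>topspace X. f x y \<in> topspace X) \<and>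
     (\<forall>x\<in>topspace X. \<forall>y\<in>topspace X. \<forall>z\<in>topspace X. f (f x y) z = f x (f y z)) \<and>
     (\<forall>a\<in>topspace X. continuous_map X X (\<lambda>x. f a x) \<and> continuous_map X X (\<lambda>x. f x a))"

definition semitop_monoid_zero :: "'a topology \<Rightarrow> ('a \<Rightarrow> 'a \<Rightarrow> 'a) \<Rightarrow> 'a \<Rightarrow> 'a \<Rightarrow> bool" where
  "semitop_monoid_zero X f e z \<longleftrightarrow>
     semitop_semigroup X f \<and> e \<in> topspace X \<and> z \<in> topspace X \<and>
     (\<forall>x\<in>topspace X. f e x = x \<and> f x e = x \<and> f z x = z \<and> f x z = z)"

text \<open>Elements of the orthogonal sum of Brandt extensions: None is the zero 0,
Some (i, \<alpha>, s, \<beta>) is the element (\<alpha>, s, \<beta>) of the i-th summand.\<close>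
type_synonym ('i, 'c, 'a) belt = "('i \<times> 'c \<times> 'a \<times> 'c) option"

definition osum_carrier ::
  "'i set \<Rightarrow> ('i \<Rightarrow> 'c set) \<Rightarrow> ('i \<Rightarrow> 'a set) \<Rightarrow> ('i \<Rightarrow> 'a) \<Rightarrow> ('i, 'c, 'a) belt set" where
  "osum_carrier I L T z =
     insert None {Some (i, \<alpha>, s, \<beta>) | i \<alpha> s \<beta>. i \<in> I \<and> \<alpha> \<in> L i \<and> \<beta> \<in> L i \<and> s \<in> T i - {z i}}"

definition brandt_part ::
  "('i \<Rightarrow> 'c set) \<Rightarrow> ('i \<Rightarrow> 'a set) \<Rightarrow> ('i \<Rightarrow> 'a) \<Rightarrow> 'i \<Rightarrow> ('i, 'c, 'a) belt set" where
  "brandt_part L T z i =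
     insert None {Some (i, \<alpha>, s, \<beta>) | \<alpha> s \<beta>. \<alpha> \<in> L i \<and> \<beta> \<in> L i \<and> s \<in> T i - {z i}}"

text \<open>The set (S_i)_{\<alpha>,\<beta>} (S_i contains its zero, so 0 is included).\<close>
definition brandt_cell ::
  "('i \<Rightarrow> 'a set) \<Rightarrow> ('i \<Rightarrow> 'a) \<Rightarrow> 'i \<Rightarrow> 'c \<Rightarrow> 'c \<Rightarrow> ('i, 'c, 'a) belt set" where
  "brandt_cell T z i \<alpha> \<beta> = insert None {Some (i, \<alpha>, s, \<beta>) | s. s \<in> T i - {z i}}"

fun osum_mult ::
  "('i \<Rightarrow> 'a \<Rightarrow> 'a \<Rightarrow> 'a) \<Rightarrow> ('i \<Rightarrow> 'a) \<Rightarrow> ('i, 'c, 'a) belt \<Rightarrow> ('i, 'c, 'a) belt \<Rightarrow> ('i, 'c, 'a) belt" where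
  "osum_mult m z (Some (i, \<alpha>, a, \<beta>)) (Some (j, \<gamma>, b, \<delta>)) =
     (if i = j \<and> \<beta> = \<gamma> \<and> m i a b \<noteq> z i then Some (i, \<alpha>, m i a b, \<delta>) else None)"
| "osum_mult m z _ _ = None"

definition diag_emb :: "('i \<Rightarrow> 'a) \<Rightarrow> 'i \<Rightarrow> 'c \<Rightarrow> 'a \<Rightarrow> ('i, 'c, 'a) belt" where
  "diag_emb z i \<alpha> s = (if s = z i then None else Some (i, \<alpha>, s, \<alpha>))"

end

theory Submission
  imports Defs
begin

text \<open>
  Write \<open>0\<close> for the zero \<open>None\<close> of the orthogonal sum \<open>S\<close> and call
  \<open>(S\<^sub>i)\<^sub>\<alpha>\<^sub>,\<^sub>\<beta> \ {0}\<close> the open cell of the triple \<open>(i, \<alpha>, \<beta>)\<close>.  Multiplying by the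
  idempotents \<open>(\<alpha>, 1, \<alpha>)\<close> and \<open>(\<beta>, 1, \<beta>)\<close> of the \<open>i\<close>-th summand, the map
  \<open>x \<mapsto> (\<alpha>, 1, \<alpha>) x (\<beta>, 1, \<beta>)\<close> is continuous (separate continuity) and is non-zero
  exactly on that cell; since \<open>{0}\<close> is closed, every open cell is open in \<open>S\<close>.

  (1) Given an open \<open>U \<ni> 0\<close>, pick one point outside \<open>U\<close> in each cell not contained
  in \<open>U\<close>.  These points form a set meeting \<open>U\<close> in nothing and every open cell in at
  most one point, hence a locally finite set, which is finite in a countably compact
  space.  Distinct triples give distinct points, so there are finitely many triples.

  (2) The complement of the summand \<open>B\<^sup>0\<^sub>\<lambda>\<^sub>i(S\<^sub>i)\<close> is a union of open cells of the other
  summands, so the summand is closed, and closed subspaces of countably compact spaces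
  are countably compact.
\<close>

section \<open>Countable compactness\<close>

lemma countably_compact_spaceE:
  assumes "countably_compact_space X" "countable \<U>" "\<forall>U\<in>\<U>. openin X U" "topspace X \<subseteq> \<Union>\<U>"
  obtains \<F> where "finite \<F>" "\<F> \<subseteq> \<U>" "topspace X \<subseteq> \<Union>\<F>"
  using assms(1)[unfolded countably_compact_space_def, rule_format,
      OF conjI[OF assms(2) conjI[OF assms(3,4)]]] that by blast

text \<open>A countable set all of whose points of the space have a neighbourhood meeting it
  in finitely many points is finite: the unions of open sets meeting the set inside a
  fixed finite subset form a countable open cover.\<close>
lemma countably_compact_locally_finite_countable:
  assumes cc: "countably_compact_space X" and "countable A" and "A \<subseteq> topspace X"
    and loc: "\<And>y. y \<in> topspace X \<Longrightarrow> \<exists>W. openin X W \<and> y \<in> W \<and> finite (W \<inter> A)"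
  shows "finite A"
proof -
  define Ob where "Ob F = \<Union>{W. openin X W \<and> W \<inter> A \<subseteq> F}" for F
  define \<U> where "\<U> = Ob ` {F. finite F \<and> F \<subseteq> A}"
  have count: "countable \<U>"
    unfolding \<U>_def using countable_Collect_finite_subset[OF \<open>countable A\<close>] by simp
  have opn: "\<forall>V\<in>\<U>. openin X V"
    unfolding \<U>_def Ob_def by (auto intro: openin_Union)
  have cover: "topspace X \<subseteq> \<Union>\<U>"
  proof
    fix y assume "y \<in> topspace X"
    then obtain W where "openin X W" "y \<in> W" "finite (W \<inter> A)" using loc by blast
    then have "y \<in> Ob (W \<inter> A)" and "Ob (W \<inter> A) \<in> \<U>" unfolding Ob_def \<U>_def by blast+
    then show "y \<in> \<Union>\<U>" by blast
  qed
  obtain \<F> where \<F>: "finite \<F>" "\<F> \<subseteq> \<U>" "topspace X \<subseteq> \<Union>\<F>"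
    using countably_compact_spaceE[OF cc count opn cover] .
  have "finite (G \<inter> A)" if "G \<in> \<F>" for G
  proof -
    obtain F where "G = Ob F" "finite F" using \<open>G \<in> \<F>\<close> \<F>(2) unfolding \<U>_def by blast
    moreover have "Ob F \<inter> A \<subseteq> F" unfolding Ob_def by blast
    ultimately show ?thesis using finite_subset by blast
  qed
  with \<F>(1) have "finite (\<Union>G\<in>\<F>. G \<inter> A)" by blast
  moreover have "A \<subseteq> (\<Union>G\<in>\<F>. G \<inter> A)" using \<open>A \<subseteq> topspace X\<close> \<F>(3) by blast
  ultimately show ?thesis by (rule finite_subset[rotated])
qed

text \<open>The countability hypothesis can be dropped: an infinite locally finite set would
  contain a countably infinite one, which is again locally finite.\<close>
lemma countably_compact_locally_finite:
  assumes cc: "countably_compact_space X" and "A \<subseteq> topspace X"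
    and loc: "\<And>y. y \<in> topspace X \<Longrightarrow> \<exists>W. openin X W \<and> y \<in> W \<and> finite (W \<inter> A)"
  shows "finite A"
proof (rule ccontr)
  assume "infinite A"
  then obtain C where C: "C \<subseteq> A" "countable C" "infinite C"
    using infinite_countable_subset' by blast
  have "finite C"
  proof (rule countably_compact_locally_finite_countable[OF cc \<open>countable C\<close>])
    show "C \<subseteq> topspace X" using C(1) \<open>A \<subseteq> topspace X\<close> by blast
    fix y assume "y \<in> topspace X"
    then obtain W where "openin X W" "y \<in> W" "finite (W \<inter> A)" using loc by blast
    moreover have "W \<inter> C \<subseteq> W \<inter> A" using C(1) by blast
    ultimately show "\<exists>W. openin X W \<and> y \<in> W \<and> finite (W \<inter> C)" by (meson finite_subset)
  qed
  with C(3) show False by contradiction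
qed

text \<open>Closed subspaces of countably compact spaces are countably compact: extend a
  countable open cover of the subspace by the open complement of the subspace.\<close>
lemma countably_compact_closedin_subtopology:
  assumes cc: "countably_compact_space X" and cl: "closedin X S"
  shows "countably_compact_space (subtopology X S)"
  unfolding countably_compact_space_def
proof (intro allI impI, elim conjE)
  fix \<U> assume "countable \<U>" and opn: "\<forall>U\<in>\<U>. openin (subtopology X S) U"
    and cover: "topspace (subtopology X S) \<subseteq> \<Union>\<U>"
  obtain V where V: "\<And>U. U \<in> \<U> \<Longrightarrow> openin X (V U) \<and> U = S \<inter> V U"
    using opn unfolding openin_subtopology by (metis Int_commute)
  define \<V> where "\<V> = insert (topspace X - S) (V ` \<U>)"
  have count: "countable \<V>" using \<open>countable \<U>\<close> by (simp add: \<V>_def)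
  have opn: "\<forall>W\<in>\<V>. openin X W" using V cl by (auto simp: \<V>_def closedin_def)
  have cover\<V>: "topspace X \<subseteq> \<Union>\<V>"
  proof
    fix x assume "x \<in> topspace X"
    show "x \<in> \<Union>\<V>"
    proof (cases "x \<in> S")
      case True
      then obtain U where "U \<in> \<U>" "x \<in> U" using cover \<open>x \<in> topspace X\<close> by auto
      then show ?thesis using V by (auto simp: \<V>_def)
    qed (use \<open>x \<in> topspace X\<close> in \<open>auto simp: \<V>_def\<close>)
  qed
  obtain \<F> where \<F>: "finite \<F>" "\<F> \<subseteq> \<V>" "topspace X \<subseteq> \<Union>\<F>"
    using countably_compact_spaceE[OF cc count opn cover\<V>] .
  define \<F>' where "\<F>' = (\<lambda>W. S \<inter> W) ` (\<F> - {topspace X - S})"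
  have "finite \<F>'" using \<F>(1) by (simp add: \<F>'_def)
  moreover have "\<F>' \<subseteq> \<U>" using \<F>(2) V by (auto simp: \<F>'_def \<V>_def)
  moreover have "topspace (subtopology X S) \<subseteq> \<Union>\<F>'" using \<F>(3) by (auto simp: \<F>'_def)
  ultimately show "\<exists>\<F>. finite \<F> \<and> \<F> \<subseteq> \<U> \<and> topspace (subtopology X S) \<subseteq> \<Union>\<F>"
    by blast
qed

lemma openin_continuous_map_avoids:
  assumes "t1_space Y" "c \<in> topspace Y" "continuous_map X Y g"
  shows "openin X {x \<in> topspace X. g x \<noteq> c}"
proof -
  have "closedin Y {c}"
    using assms(1,2) t1_space_closedin_singleton by metis
  then have "openin Y (topspace Y - {c})"
    by (rule openin_diff[OF openin_topspace])
  then have "openin X {x \<in> topspace X. g x \<in> topspace Y - {c}}"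
    using assms(3) openin_continuous_map_preimage by blast
  moreover have "{x \<in> topspace X. g x \<in> topspace Y - {c}} = {x \<in> topspace X. g x \<noteq> c}"
    using assms(3) by (auto simp: continuous_map_def)
  ultimately show ?thesis by simp
qed

section \<open>Cells of an orthogonal sum of Brandt extensions\<close>

locale orthogonal_brandt_sum =
  fixes I :: "'i set"
    and L :: "'i \<Rightarrow> 'c set"
    and tau :: "'i \<Rightarrow> 'a topology"
    and m :: "'i \<Rightarrow> 'a \<Rightarrow> 'a \<Rightarrow> 'a"
    and e z :: "'i \<Rightarrow> 'a"
    and X :: "('i, 'c, 'a) belt topology"
  assumes monoids: "\<forall>i\<in>I. semitop_monoid_zero (tau i) (m i) (e i) (z i)"
    and carrier: "topspace X = osum_carrier I L (\<lambda>i. topspace (tau i)) z"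
    and semitop: "semitop_semigroup X (osum_mult m z)"
begin

abbreviation S :: "'i \<Rightarrow> 'a set" where
  "S i \<equiv> topspace (tau i)"

definition open_cell :: "'i \<Rightarrow> 'c \<Rightarrow> 'c \<Rightarrow> ('i, 'c, 'a) belt set" where
  "open_cell i \<alpha> \<beta> = brandt_cell S z i \<alpha> \<beta> - {None}"

definition diag_unit :: "'i \<Rightarrow> 'c \<Rightarrow> ('i, 'c, 'a) belt" where
  "diag_unit i \<alpha> = Some (i, \<alpha>, e i, \<alpha>)"

lemma zero_in_carrier: "None \<in> topspace X"
  using carrier by (simp add: osum_carrier_def)

lemma Some_in_carrier:
  "Some (i, \<alpha>, s, \<beta>) \<in> topspace X \<longleftrightarrow> i \<in> I \<and> \<alpha> \<in> L i \<and> \<beta> \<in> L i \<and> s \<in> S i \<and> s \<noteq> z i"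
  using carrier by (auto simp: osum_carrier_def)

lemma mem_open_cell:
  "x \<in> open_cell i \<alpha> \<beta> \<longleftrightarrow> (\<exists>s. x = Some (i, \<alpha>, s, \<beta>) \<and> s \<in> S i \<and> s \<noteq> z i)"
  by (auto simp: open_cell_def brandt_cell_def)

lemma open_cell_subset_carrier:
  "i \<in> I \<Longrightarrow> \<alpha> \<in> L i \<Longrightarrow> \<beta> \<in> L i \<Longrightarrow> open_cell i \<alpha> \<beta> \<subseteq> topspace X"
  by (auto simp: mem_open_cell Some_in_carrier)

lemma open_cell_unique:
  "x \<in> open_cell i \<alpha> \<beta> \<Longrightarrow> x \<in> open_cell j \<gamma> \<delta> \<Longrightarrow> (i, \<alpha>, \<beta>) = (j, \<gamma>, \<delta>)"
  by (auto simp: mem_open_cell)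

lemma nonzero_in_open_cell:
  assumes "x \<in> topspace X" "x \<noteq> None"
  obtains i \<alpha> \<beta> where "i \<in> I" "\<alpha> \<in> L i" "\<beta> \<in> L i" "x \<in> open_cell i \<alpha> \<beta>"
  using assms by (cases x) (auto simp: Some_in_carrier mem_open_cell)

text \<open>The identity \<open>e i\<close> is non-zero as soon as \<open>S\<^sub>i\<close> has a non-zero element, so then
  \<open>(\<alpha>, 1, \<alpha>)\<close> belongs to the sum.\<close>
lemma diag_unit_in_carrier:
  assumes "i \<in> I" "\<alpha> \<in> L i" "s \<in> S i" "s \<noteq> z i"
  shows "diag_unit i \<alpha> \<in> topspace X"
proof -
  have "e i \<in> S i" "m i (e i) s = s" "m i (z i) s = z i"
    using monoids assms(1,3) by (auto simp: semitop_monoid_zero_def)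
  then have "e i \<noteq> z i" using \<open>s \<noteq> z i\<close> by metis
  with \<open>e i \<in> S i\<close> assms(1,2) show ?thesis by (simp add: diag_unit_def Some_in_carrier)
qed

lemma sandwich_nonzero_iff:
  assumes "i \<in> I" "x \<in> topspace X"
  shows "osum_mult m z (osum_mult m z (diag_unit i \<alpha>) x) (diag_unit i \<beta>) \<noteq> None
           \<longleftrightarrow> x \<in> open_cell i \<alpha> \<beta>"
proof
  assume "osum_mult m z (osum_mult m z (diag_unit i \<alpha>) x) (diag_unit i \<beta>) \<noteq> None"
  then obtain s where "x = Some (i, \<alpha>, s, \<beta>)"
    unfolding diag_unit_def by (cases x) (auto split: if_splits)
  with assms(2) show "x \<in> open_cell i \<alpha> \<beta>" by (simp add: Some_in_carrier mem_open_cell)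
next
  assume "x \<in> open_cell i \<alpha> \<beta>"
  then obtain s where s: "x = Some (i, \<alpha>, s, \<beta>)" "s \<in> S i" "s \<noteq> z i"
    by (auto simp: mem_open_cell)
  moreover have "m i (e i) s = s" "m i s (e i) = s"
    using monoids assms(1) s(2) by (auto simp: semitop_monoid_zero_def)
  ultimately show "osum_mult m z (osum_mult m z (diag_unit i \<alpha>) x) (diag_unit i \<beta>) \<noteq> None"
    by (simp add: diag_unit_def)
qed

lemma continuous_left_mult: "a \<in> topspace X \<Longrightarrow> continuous_map X X (osum_mult m z a)"
  using semitop unfolding semitop_semigroup_def by simp

lemma continuous_right_mult: "a \<in> topspace X \<Longrightarrow> continuous_map X X (\<lambda>x. osum_mult m z x a)"
  using semitop unfolding semitop_semigroup_def by simp

lemma t1_space_sum: "t1_space X"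
  using semitop unfolding semitop_semigroup_def by (simp add: Hausdorff_imp_t1_space)

text \<open>Open cells are open: they are the sets where the continuous sandwich map avoids
  the closed point \<open>0\<close>.  (An empty cell is trivially open.)\<close>
lemma openin_open_cell:
  assumes "i \<in> I" "\<alpha> \<in> L i" "\<beta> \<in> L i"
  shows "openin X (open_cell i \<alpha> \<beta>)"
proof (cases "open_cell i \<alpha> \<beta> = {}")
  case False
  then obtain s where "s \<in> S i" "s \<noteq> z i" by (auto simp: mem_open_cell)
  then have units: "diag_unit i \<alpha> \<in> topspace X" "diag_unit i \<beta> \<in> topspace X"
    using assms diag_unit_in_carrier by blast+
  let ?g = "\<lambda>x. osum_mult m z (osum_mult m z (diag_unit i \<alpha>) x) (diag_unit i \<beta>)"
  have "continuous_map X X ?g"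
    using continuous_map_compose[OF continuous_left_mult[OF units(1)] continuous_right_mult[OF units(2)]]
    by (simp add: o_def)
  then have "openin X {x \<in> topspace X. ?g x \<noteq> None}"
    by (rule openin_continuous_map_avoids[OF t1_space_sum zero_in_carrier])
  moreover have "{x \<in> topspace X. ?g x \<noteq> None} = open_cell i \<alpha> \<beta>"
    using sandwich_nonzero_iff[OF assms(1), of _ \<alpha> \<beta>] open_cell_subset_carrier[OF assms]
    by blast
  ultimately show ?thesis by simp
qed simp

lemma finitely_many_cells_outside:
  assumes cc: "countably_compact_space X" and U: "openin X U" "None \<in> U"
  shows "finite {(i, \<alpha>, \<beta>). i \<in> I \<and> \<alpha> \<in> L i \<and> \<beta> \<in> L i \<and> \<not> brandt_cell S z i \<alpha> \<beta> \<subseteq> U}"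
    (is "finite ?B")
proof -
  have "\<forall>t\<in>?B. \<exists>x. x \<notin> U \<and> x \<in> topspace X \<and>
                (\<forall>j \<gamma> \<delta>. x \<in> open_cell j \<gamma> \<delta> \<longleftrightarrow> t = (j, \<gamma>, \<delta>))"
  proof
    fix t assume "t \<in> ?B"
    obtain i \<alpha> \<beta> where t: "t = (i, \<alpha>, \<beta>)" by (cases t)
    with \<open>t \<in> ?B\<close> have triple: "i \<in> I" "\<alpha> \<in> L i" "\<beta> \<in> L i"
      and "\<not> brandt_cell S z i \<alpha> \<beta> \<subseteq> U" by simp_all
    then obtain x where "x \<in> brandt_cell S z i \<alpha> \<beta>" "x \<notin> U" by blast
    moreover from this(2) U(2) have "x \<noteq> None" by metis
    ultimately have "x \<in> open_cell i \<alpha> \<beta>" unfolding open_cell_def by blast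
    then have "x \<in> topspace X" "\<forall>j \<gamma> \<delta>. x \<in> open_cell j \<gamma> \<delta> \<longleftrightarrow> t = (j, \<gamma>, \<delta>)"
      using open_cell_subset_carrier[OF triple] open_cell_unique t by blast+
    with \<open>x \<notin> U\<close> show "\<exists>x. x \<notin> U \<and> x \<in> topspace X \<and>
                (\<forall>j \<gamma> \<delta>. x \<in> open_cell j \<gamma> \<delta> \<longleftrightarrow> t = (j, \<gamma>, \<delta>))" by blast
  qed
  from bchoice[OF this] obtain p where p: "\<forall>t\<in>?B. p t \<notin> U \<and> p t \<in> topspace X \<and>
                (\<forall>j \<gamma> \<delta>. p t \<in> open_cell j \<gamma> \<delta> \<longleftrightarrow> t = (j, \<gamma>, \<delta>))" ..
  have p_facts: "p t \<notin> U" "p t \<in> topspace X" "p t \<in> open_cell j \<gamma> \<delta> \<longleftrightarrow> t = (j, \<gamma>, \<delta>)"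
    if "t \<in> ?B" for t j \<gamma> \<delta>
    using p that by blast+
  have "inj_on p ?B"
  proof (rule inj_onI)
    fix s t assume "s \<in> ?B" "t \<in> ?B" "p s = p t"
    obtain i \<alpha> \<beta> where "s = (i, \<alpha>, \<beta>)" by (cases s)
    with p_facts(3)[OF \<open>s \<in> ?B\<close>] p_facts(3)[OF \<open>t \<in> ?B\<close>] \<open>p s = p t\<close>
    show "s = t" by metis
  qed
  moreover have "finite (p ` ?B)"
  proof (rule countably_compact_locally_finite[OF cc])
    show "p ` ?B \<subseteq> topspace X" using p_facts(2) by blast
    fix y assume y: "y \<in> topspace X"
    show "\<exists>W. openin X W \<and> y \<in> W \<and> finite (W \<inter> p ` ?B)"
    proof (cases "y = None")
      case True
      have "U \<inter> p ` ?B = {}" using p_facts(1) by blast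
      with U True show ?thesis by (intro exI[of _ U]) simp
    next
      case False
      then obtain j \<gamma> \<delta> where j: "j \<in> I" "\<gamma> \<in> L j" "\<delta> \<in> L j" "y \<in> open_cell j \<gamma> \<delta>"
        using y nonzero_in_open_cell by blast
      have "open_cell j \<gamma> \<delta> \<inter> p ` ?B \<subseteq> {p (j, \<gamma>, \<delta>)}"
      proof
        fix x assume "x \<in> open_cell j \<gamma> \<delta> \<inter> p ` ?B"
        then obtain t where "t \<in> ?B" "x = p t" "p t \<in> open_cell j \<gamma> \<delta>" by blast
        then show "x \<in> {p (j, \<gamma>, \<delta>)}" using p_facts(3) by simp
      qed
      then have "finite (open_cell j \<gamma> \<delta> \<inter> p ` ?B)" by (rule finite_subset) simp
      then show ?thesis using openin_open_cell[OF j(1-3)] j(4) by blast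
    qed
  qed
  ultimately show ?thesis using finite_image_iff by blast
qed

lemma open_cell_subset_brandt_part:
  "\<alpha> \<in> L i \<Longrightarrow> \<beta> \<in> L i \<Longrightarrow> open_cell i \<alpha> \<beta> \<subseteq> brandt_part L S z i"
  by (auto simp: mem_open_cell brandt_part_def)

lemma open_cell_disjoint_brandt_part:
  "j \<noteq> i \<Longrightarrow> open_cell j \<gamma> \<delta> \<inter> brandt_part L S z i = {}"
  by (auto simp: mem_open_cell brandt_part_def)

text \<open>Part (2): each summand is closed, its complement being a union of open cells
  of the other summands.\<close>
lemma closedin_brandt_part:
  assumes "i \<in> I"
  shows "closedin X (brandt_part L S z i)"
proof -
  have "openin X (topspace X - brandt_part L S z i)"
  proof (subst openin_subopen, intro ballI)
    fix x assume x: "x \<in> topspace X - brandt_part L S z i"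
    then have "x \<noteq> None" by (auto simp: brandt_part_def)
    with x obtain j \<gamma> \<delta> where j: "j \<in> I" "\<gamma> \<in> L j" "\<delta> \<in> L j" "x \<in> open_cell j \<gamma> \<delta>"
      by (meson DiffD1 nonzero_in_open_cell)
    have "j \<noteq> i" using x j open_cell_subset_brandt_part by blast
    then have "open_cell j \<gamma> \<delta> \<subseteq> topspace X - brandt_part L S z i"
      using open_cell_subset_carrier[OF j(1-3)] open_cell_disjoint_brandt_part by blast
    then show "\<exists>W. openin X W \<and> x \<in> W \<and> W \<subseteq> topspace X - brandt_part L S z i"
      using openin_open_cell[OF j(1-3)] j(4) by blast
  qed
  moreover have "brandt_part L S z i \<subseteq> topspace X"
    using assms by (auto simp: brandt_part_def Some_in_carrier zero_in_carrier)
  ultimately show ?thesis by (simp add: closedin_def)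
qed

end

theorem proposition2p4:
  fixes I :: "'i set"
    and L :: "'i \<Rightarrow> 'c set"
    and tau :: "'i \<Rightarrow> 'a topology"
    and m :: "'i \<Rightarrow> 'a \<Rightarrow> 'a \<Rightarrow> 'a"
    and e z :: "'i \<Rightarrow> 'a"
    and X :: "('i, 'c, 'a) belt topology"
  assumes monoids: "\<forall>i\<in>I. semitop_monoid_zero (tau i) (m i) (e i) (z i)"
    and lambda_nonempty: "\<forall>i\<in>I. L i \<noteq> {}"
    and carrier: "topspace X = osum_carrier I L (\<lambda>i. topspace (tau i)) z"
    and semitop: "semitop_semigroup X (osum_mult m z)"
    and brandt: "\<forall>i\<in>I. semitop_semigroup
                         (subtopology X (brandt_part L (\<lambda>i. topspace (tau i)) z i)) (osum_mult m z)
                    \<and> (\<exists>\<alpha>\<in>L i. homeomorphic_map (tau i)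
                         (subtopology X (brandt_cell (\<lambda>i. topspace (tau i)) z i \<alpha> \<alpha>))
                         (diag_emb z i \<alpha>))"
    and ccompact: "countably_compact_space X"
  shows "(\<forall>U. openin X U \<and> None \<in> U \<longrightarrow>
            finite {(i, \<alpha>, \<beta>). i \<in> I \<and> \<alpha> \<in> L i \<and> \<beta> \<in> L i \<and>
                      \<not> brandt_cell (\<lambda>i. topspace (tau i)) z i \<alpha> \<beta> \<subseteq> U})
         \<and> (\<forall>i\<in>I. countably_compact_space
                     (subtopology X (brandt_part L (\<lambda>i. topspace (tau i)) z i)))"
proof -
  interpret orthogonal_brandt_sum I L tau m e z X
    using monoids carrier semitop by unfold_locales
  show ?thesis
    using finitely_many_cells_outside[OF ccompact] closedin_brandt_part
      countably_compact_closedin_subtopology[OF ccompact] by blast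
qed

end
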